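(* Let $n\ge1$, $0<\epsilon\le1$, $0\le\tau<1$, and let $G=(V,E)$ be a comparison graph. Let $P$ be a distribution on $[n]$ with $\|P-U_n\|\ge\epsilon$ and $|E|(\mu_P-\mu_P^2)\ge c(G)(\gamma_P-\mu_P^2)$. If $|E|\ge\dfrac{16n}{(1-\tau)^2\epsilon^4}$, then the collision-based algorithm $(G,\tau)$ outputs YES on $P$ with probability at most $1/4$.
   Context: $U_n$ is the uniform distribution on $[n]$; $\|P-Q\|=\sum_i|P_i-Q_i|$. $\mu_P=\sum_iP_i^2$, $\gamma_P=\sum_iP_i^3$. A comparison graph is a finite simple undirected graph $G=(V,E)$; $c(G)$ is the number of ordered triples $(u,v,w)$ of distinct vertices with $\{u,v\},\{v,w\}\in E$. Given $P$, each vertex $v$ receives an independent sample $S(v)\sim P$; for $e=\{u,v\}\in E$, $\mathbf 1_e=\mathbf 1[S(u)=S(v)]$; $Z=\sum_{e\in E}\mathbf 1_e$ and $T=|E|\frac{1+\tau\epsilon^2}{n}$; the algorithm $(G,\tau)$ outputs YES if $Z<T$ and NO otherwise. *)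

theory Defs
  imports "HOL-Probability.Probability"
begin

definition comparison_graph :: "'v set \<Rightarrow> 'v set set \<Rightarrow> bool" where
  "comparison_graph V E \<longleftrightarrow> finite V \<and> (\<forall>e\<in>E. e \<subseteq> V \<and> card e = 2)"

definition cG :: "'v set \<Rightarrow> 'v set set \<Rightarrow> nat" where
  "cG V E = card {(u,v,w). u \<in> V \<and> v \<in> V \<and> w \<in> V \<and> u \<noteq> v \<and> v \<noteq> w \<and> u \<noteq> w
                  \<and> {u,v} \<in> E \<and> {v,w} \<in> E}"

text \<open>Distribution on [n] = {1..n}, given as a pmf supported in {1..n}.\<close>
definition l1_to_uniform :: "nat \<Rightarrow> nat pmf \<Rightarrow> real" where
  "l1_to_uniform n P = (\<Sum>i\<in>{1..n}. \<bar>pmf P i - 1 / real n\<bar>)"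

definition muP :: "nat \<Rightarrow> nat pmf \<Rightarrow> real" where
  "muP n P = (\<Sum>i\<in>{1..n}. pmf P i ^ 2)"

definition gammaP :: "nat \<Rightarrow> nat pmf \<Rightarrow> real" where
  "gammaP n P = (\<Sum>i\<in>{1..n}. pmf P i ^ 3)"

definition collisions :: "'v set set \<Rightarrow> ('v \<Rightarrow> nat) \<Rightarrow> nat" where
  "collisions E S = card {e \<in> E. \<exists>u v. e = {u, v} \<and> S u = S v}"

definition threshold :: "'v set set \<Rightarrow> nat \<Rightarrow> real \<Rightarrow> real \<Rightarrow> real" where
  "threshold E n \<tau> \<epsilon> = real (card E) * (1 + \<tau> * \<epsilon>^2) / real n"

definition prob_yes :: "'v set \<Rightarrow> 'v set set \<Rightarrow> nat \<Rightarrow> real \<Rightarrow> real \<Rightarrow> nat pmf \<Rightarrow> real" where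
  "prob_yes V E n \<tau> \<epsilon> P =
     measure_pmf.prob (Pi_pmf V 0 (\<lambda>_. P))
       {S. real (collisions E S) < threshold E n \<tau> \<epsilon>}"

end

theory Submission
  imports Defs
begin

text \<open>Write \<open>Z = \<Sum>\<^sub>e X\<^sub>e\<close> for the number of colliding edges, where \<open>X\<^sub>e\<close> indicates a collision on
  \<open>e\<close>. Then \<open>E Z = |E| \<mu>\<^sub>P\<close>, and \<open>E (X\<^sub>e X\<^sub>f)\<close> is \<open>\<mu>\<^sub>P\<close>, \<open>\<gamma>\<^sub>P\<close> or \<open>\<mu>\<^sub>P\<^sup>2\<close> according as \<open>e = f\<close>, \<open>e\<close> and
  \<open>f\<close> share one vertex, or are disjoint. Since every ordered pair of adjacent edges comes from a
  path \<open>(u,v,w)\<close> counted by \<open>c(G)\<close>, the hypothesis on \<open>c(G)\<close> gives \<open>Var Z \<le> 2 |E| \<mu>\<^sub>P\<close>. Far from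
  uniform means \<open>\<mu>\<^sub>P \<ge> (1 + \<epsilon>\<^sup>2)/n\<close> by Cauchy-Schwarz, so the threshold lies at least
  \<open>|E| (1 - \<tau>) (\<mu>\<^sub>P - 1/n)\<close> below \<open>E Z\<close>, and Chebyshev's inequality together with the lower bound
  on \<open>|E|\<close> bounds the probability of answering YES by \<open>1/4\<close>.\<close>

lemma prob_Pi_pmf_agree_on:
  assumes "finite V" "W \<subseteq> V"
  shows "measure_pmf.prob (Pi_pmf V d (\<lambda>_. P)) {S. \<forall>a\<in>W. S a = c a} = (\<Prod>a\<in>W. pmf P (c a))"
proof -
  have "{S. \<forall>a\<in>W. S a = c a} = Pi V (\<lambda>a. if a \<in> W then {c a} else UNIV)"
    using assms(2) by (auto simp: Pi_def)
  hence "measure_pmf.prob (Pi_pmf V d (\<lambda>_. P)) {S. \<forall>a\<in>W. S a = c a}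
      = (\<Prod>a\<in>V. if a \<in> W then pmf P (c a) else 1)"
    using assms(1) by (simp add: measure_Pi_pmf_Pi if_distrib measure_pmf_single cong: if_cong)
  also have "\<dots> = (\<Prod>a\<in>W. pmf P (c a))"
    using assms by (simp add: prod.If_cases Int_absorb1)
  finally show ?thesis .
qed

lemma expectation_of_bool_eq_prob:
  "measure_pmf.expectation M (\<lambda>x. of_bool (Q x) :: real) = measure_pmf.prob M {x. Q x}"
proof -
  have "(\<lambda>x. of_bool (Q x) :: real) = indicator {x. Q x}" by (auto simp: indicator_def)
  thus ?thesis by simp
qed

lemma integrable_of_bool_pmf [simp]: "integrable (measure_pmf M) (\<lambda>x. of_bool (Q x) :: real)"
  by (rule measure_pmf.integrable_const_bound[where B = 1]) auto

lemma integrable_Pi_pmf_finite: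
  assumes "finite V" "finite (set_pmf P)"
  shows "integrable (measure_pmf (Pi_pmf V d (\<lambda>_. P))) (g :: _ \<Rightarrow> real)"
  by (rule integrable_measure_pmf_finite) (use assms in \<open>auto simp: set_Pi_pmf\<close>)

lemma (in prob_space) prob_less_le_variance:
  assumes "f \<in> borel_measurable M" "integrable M (\<lambda>x. f x ^ 2)" "0 < d" "t \<le> expectation f - d"
  shows "prob {x \<in> space M. f x < t} \<le> variance f / d\<^sup>2"
proof -
  have "prob {x \<in> space M. f x < t} \<le> prob {x \<in> space M. d \<le> \<bar>f x - expectation f\<bar>}"
    using assms(1,4) by (intro finite_measure_mono) auto
  also have "\<dots> \<le> variance f / d\<^sup>2"
    using assms(1-3) by (rule Chebyshev_inequality)
  finally show ?thesis .
qed

lemma sum_squares_ge_of_l1_distance_uniform: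
  fixes p :: "'a \<Rightarrow> real"
  assumes "finite A" "A \<noteq> {}" "sum p A = 1" "0 \<le> \<epsilon>" "\<epsilon> \<le> (\<Sum>i\<in>A. \<bar>p i - 1 / card A\<bar>)"
  shows "\<epsilon>\<^sup>2 / card A \<le> (\<Sum>i\<in>A. (p i)\<^sup>2) - 1 / card A"
proof -
  define c where "c = 1 / real (card A)"
  have n: "0 < real (card A)" using assms(1,2) by (simp add: card_gt_0_iff)
  have "\<epsilon>\<^sup>2 \<le> (\<Sum>i\<in>A. \<bar>p i - c\<bar> * 1)\<^sup>2"
    using assms(4,5) unfolding c_def by (simp add: power_mono)
  also have "\<dots> \<le> (\<Sum>i\<in>A. \<bar>p i - c\<bar>\<^sup>2) * (\<Sum>i\<in>A. 1\<^sup>2)"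
    by (rule Cauchy_Schwarz_ineq_sum)
  also have "(\<Sum>i\<in>A. \<bar>p i - c\<bar>\<^sup>2) = (\<Sum>i\<in>A. (p i)\<^sup>2 - 2 * c * p i + c\<^sup>2)"
    by (intro sum.cong) (simp_all add: power2_eq_square algebra_simps)
  also have "\<dots> = (\<Sum>i\<in>A. (p i)\<^sup>2) - 2 * c * sum p A + card A * c\<^sup>2"
    by (simp add: sum.distrib sum_subtractf sum_distrib_left)
  also have "\<dots> = (\<Sum>i\<in>A. (p i)\<^sup>2) - c"
    using assms(3) n unfolding c_def by (simp add: power2_eq_square field_simps)
  finally show ?thesis using n unfolding c_def by (simp add: divide_le_eq mult.commute)
qed

lemma sum_squares_squared_le_sum_cubes:
  fixes p :: "'a \<Rightarrow> real"
  assumes "sum p A = 1" "\<And>i. i \<in> A \<Longrightarrow> 0 \<le> p i"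
  shows "(\<Sum>i\<in>A. (p i)\<^sup>2)\<^sup>2 \<le> (\<Sum>i\<in>A. p i ^ 3)"
proof -
  have "(\<Sum>i\<in>A. (p i * sqrt (p i)) * sqrt (p i))\<^sup>2
      \<le> (\<Sum>i\<in>A. (p i * sqrt (p i))\<^sup>2) * (\<Sum>i\<in>A. (sqrt (p i))\<^sup>2)"
    by (rule Cauchy_Schwarz_ineq_sum)
  moreover have "(\<Sum>i\<in>A. (p i * sqrt (p i)) * sqrt (p i)) = (\<Sum>i\<in>A. (p i)\<^sup>2)"
    using assms(2) by (intro sum.cong) (simp_all add: power2_eq_square)
  moreover have "(\<Sum>i\<in>A. (p i * sqrt (p i))\<^sup>2) = (\<Sum>i\<in>A. p i ^ 3)"
    using assms(2) by (intro sum.cong) (simp_all add: power_mult_distrib power3_eq_cube power2_eq_square)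
  moreover have "(\<Sum>i\<in>A. (sqrt (p i))\<^sup>2) = 1"
    using assms by (simp cong: sum.cong)
  ultimately show ?thesis by simp
qed

lemma sum_sum_diagonal_relation:
  fixes a b c :: real
  assumes "finite E" "A \<subseteq> E \<times> E"
  shows "(\<Sum>e\<in>E. \<Sum>f\<in>E. a + of_bool (e = f) * b + of_bool ((e, f) \<in> A) * c)
    = (real (card E))\<^sup>2 * a + real (card E) * b + real (card A) * c"
proof -
  have "(\<Sum>e\<in>E. \<Sum>f\<in>E. of_bool (e = f) :: real) = card E"
    using assms(1) by (simp del: sum_of_bool_eq add: of_bool_def sum.delta)
  moreover have "(\<Sum>e\<in>E. \<Sum>f\<in>E. of_bool ((e, f) \<in> A) :: real) = (\<Sum>x\<in>E \<times> E. of_bool (x \<in> A))"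
    by (simp del: sum_of_bool_eq add: sum.cartesian_product case_prod_beta)
  moreover have "(E \<times> E) \<inter> {x. x \<in> A} = A" using assms(2) by blast
  moreover have "(\<Sum>e\<in>E. \<Sum>f\<in>E. a + of_bool (e = f) * b + of_bool ((e, f) \<in> A) * c)
      = (\<Sum>e\<in>E. \<Sum>f\<in>E. a) + (\<Sum>e\<in>E. \<Sum>f\<in>E. of_bool (e = f)) * b
        + (\<Sum>e\<in>E. \<Sum>f\<in>E. of_bool ((e, f) \<in> A)) * c"
    by (simp del: sum_of_bool_eq add: sum.distrib sum_distrib_right)
  ultimately show ?thesis using assms(1) by (simp add: power2_eq_square)
qed

lemma threshold_le_mean_minus_gap:
  assumes "0 \<le> \<tau>" "\<epsilon>\<^sup>2 / n \<le> \<mu> - 1 / n"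
  shows "threshold E n \<tau> \<epsilon> \<le> real (card E) * \<mu> - real (card E) * (1 - \<tau>) * (\<mu> - 1 / n)"
proof -
  have "1 / n + \<tau> * (\<epsilon>\<^sup>2 / n) \<le> 1 / n + \<tau> * (\<mu> - 1 / n)"
    using assms by (intro add_left_mono mult_left_mono)
  hence "real (card E) * (1 / n + \<tau> * (\<epsilon>\<^sup>2 / n)) \<le> real (card E) * (1 / n + \<tau> * (\<mu> - 1 / n))"
    by (simp add: mult_left_mono)
  thus ?thesis unfolding threshold_def by (simp add: algebra_simps add_divide_distrib)
qed

lemma chebyshev_ratio_le_quarter:
  fixes m n \<delta> \<epsilon> \<tau> :: real
  assumes "1 \<le> n" "0 < \<epsilon>" "\<epsilon> \<le> 1" "\<tau> < 1" "\<epsilon>\<^sup>2 / n \<le> \<delta>"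
    and "16 * n / ((1 - \<tau>)\<^sup>2 * \<epsilon> ^ 4) \<le> m"
  shows "2 * m * (1 / n + \<delta>) / (m * (1 - \<tau>) * \<delta>)\<^sup>2 \<le> 1 / 4"
proof -
  \<comment> \<open>\<open>y \<ge> 1/n\<close> and \<open>y \<ge> \<delta>\<close>, so each of \<open>8/n\<close> and \<open>8\<delta>\<close> is at most \<open>8 n y\<^sup>2 = 8 n \<delta>\<^sup>2 / \<epsilon>\<^sup>4\<close>\<close>
  define y where "y = \<delta> / \<epsilon>\<^sup>2"
  have e2: "0 < \<epsilon>\<^sup>2" "\<epsilon>\<^sup>2 \<le> 1" using assms(2,3) by (auto simp: power_le_one)
  have ny: "1 \<le> n * y" using assms(1,5) e2 unfolding y_def by (simp add: field_simps)
  have "0 < \<epsilon>\<^sup>2 / n" using assms(1) e2 by simp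
  hence "0 < \<delta>" using assms(5) by linarith
  hence y: "0 < y" "\<delta> \<le> y" "\<delta> = y * \<epsilon>\<^sup>2"
    using e2 unfolding y_def by (simp_all add: le_divide_eq mult_le_cancel_left1)
  have "1 / n \<le> y" using ny assms(1) by (simp add: divide_le_eq mult.commute)
  moreover have "y \<le> y * (n * y)" using ny y(1) by (simp add: mult_le_cancel_left1)
  ultimately have "8 * (1 / n + \<delta>) \<le> 16 * (y * (n * y))"
    using y(2) by (simp add: distrib_left)
  also have "\<dots> = 16 * n / \<epsilon> ^ 4 * \<delta>\<^sup>2"
    using e2 unfolding y_def by (simp add: field_simps power2_eq_square eval_nat_numeral)
  also have "\<dots> = 16 * n / ((1 - \<tau>)\<^sup>2 * \<epsilon> ^ 4) * ((1 - \<tau>)\<^sup>2 * \<delta>\<^sup>2)"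
    using assms(4) by (simp add: field_simps)
  also have "\<dots> \<le> m * ((1 - \<tau>)\<^sup>2 * \<delta>\<^sup>2)"
    using assms(6) by (rule mult_right_mono) simp
  finally have key: "8 * (1 / n + \<delta>) \<le> m * (1 - \<tau>)\<^sup>2 * \<delta>\<^sup>2" by simp
  have "0 < 1 / n" using assms(1) by simp
  hence "0 < 8 * (1 / n + \<delta>)" using \<open>0 < \<delta>\<close> by (simp add: add_pos_pos)
  hence pos: "0 < m * (1 - \<tau>)\<^sup>2 * \<delta>\<^sup>2" using key by linarith
  hence "0 < m" by (simp add: zero_less_mult_iff)
  hence "2 * m * (1 / n + \<delta>) / (m * (1 - \<tau>) * \<delta>)\<^sup>2 = 2 * (1 / n + \<delta>) / (m * (1 - \<tau>)\<^sup>2 * \<delta>\<^sup>2)"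
    by (simp add: power2_eq_square)
  also have "\<dots> \<le> 1 / 4" using key pos by (simp add: pos_divide_le_eq)
  finally show ?thesis .
qed

section \<open>Adjacent edges\<close>

definition adjacent_edge_pairs :: "'v set set \<Rightarrow> ('v set \<times> 'v set) set" where
  "adjacent_edge_pairs E = {(e, f). e \<in> E \<and> f \<in> E \<and> e \<noteq> f \<and> e \<inter> f \<noteq> {}}"

lemma comparison_graph_finite_edges:
  assumes "comparison_graph V E"
  shows "finite E"
  using assms by (intro finite_subset[of E "Pow V"]) (auto simp: comparison_graph_def)

lemma card_2_obtain_other:
  assumes "card g = 2" "x \<in> g"
  obtains u where "u \<noteq> x" "g = {x, u}"
  using assms unfolding card_2_iff by (metis insert_commute insertE singletonD)

lemma card_Un_adjacent_edges:
  assumes "card e = 2" "card f = 2" "e \<noteq> f" "c \<in> e" "c \<in> f"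
  shows "card (e \<union> f) = 3"
proof -
  obtain u where u: "u \<noteq> c" "e = {c, u}" using card_2_obtain_other[OF assms(1,4)] .
  obtain w where w: "w \<noteq> c" "f = {c, w}" using card_2_obtain_other[OF assms(2,5)] .
  have "u \<noteq> w" using u w assms(3) by auto
  moreover have "e \<union> f = {c, u, w}" using u w by auto
  ultimately show ?thesis using u w by simp
qed

lemma card_adjacent_edge_pairs_le_cG:
  assumes "comparison_graph V E"
  shows "card (adjacent_edge_pairs E) \<le> cG V E"
proof -
  define paths where "paths = {(u,v,w). u \<in> V \<and> v \<in> V \<and> w \<in> V \<and> u \<noteq> v \<and> v \<noteq> w \<and> u \<noteq> w
                  \<and> {u,v} \<in> E \<and> {v,w} \<in> E}"
  have "finite V" using assms by (simp add: comparison_graph_def)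
  hence fin: "finite paths" by (intro finite_subset[of paths "V \<times> V \<times> V"]) (auto simp: paths_def)
  have "adjacent_edge_pairs E \<subseteq> (\<lambda>(u,v,w). ({u,v},{v,w})) ` paths"
  proof safe
    fix e f assume "(e, f) \<in> adjacent_edge_pairs E"
    then obtain v where ef: "e \<in> E" "f \<in> E" "e \<noteq> f" "v \<in> e" "v \<in> f"
      unfolding adjacent_edge_pairs_def by blast
    have V: "e \<subseteq> V" "f \<subseteq> V" and "card e = 2" "card f = 2"
      using assms ef by (auto simp: comparison_graph_def)
    obtain u where u: "u \<noteq> v" "e = {u, v}"
      using card_2_obtain_other[OF \<open>card e = 2\<close> ef(4)] by (metis insert_commute)
    obtain w where w: "w \<noteq> v" "f = {v, w}"
      using card_2_obtain_other[OF \<open>card f = 2\<close> ef(5)] .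
    have "u \<noteq> w" using u w ef(3) by auto
    hence "(u, v, w) \<in> paths" using u w ef(1,2) V unfolding paths_def by auto
    thus "(e, f) \<in> (\<lambda>(u,v,w). ({u,v},{v,w})) ` paths"
      using u w by force
  qed
  hence "card (adjacent_edge_pairs E) \<le> card ((\<lambda>(u,v,w). ({u,v},{v,w})) ` paths)"
    using fin by (intro card_mono finite_imageI)
  also have "\<dots> \<le> card paths" using fin by (rule card_image_le)
  finally show ?thesis unfolding cG_def paths_def .
qed

section \<open>Collision indicators and their moments\<close>

text \<open>The collision indicator of an edge, written as a sum over the colours \<open>1..n\<close> so that its
  moments factor over the product pmf. Counting only colours in \<open>{1..n}\<close> loses nothing when \<open>P\<close>
  is supported there.\<close>
definition monochrome :: "nat \<Rightarrow> 'v set \<Rightarrow> ('v \<Rightarrow> nat) \<Rightarrow> real" where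
  "monochrome n e S = (\<Sum>i\<in>{1..n}. of_bool (\<forall>a\<in>e. S a = i))"

lemma integrable_monochrome [simp]: "integrable (measure_pmf M) (monochrome n e)"
  unfolding monochrome_def by (intro Bochner_Integration.integrable_sum integrable_of_bool_pmf)

lemma monochrome_eq_of_bool:
  assumes "c \<in> e"
  shows "monochrome n e S = of_bool (S c \<in> {1..n} \<and> (\<forall>a\<in>e. S a = S c))"
proof -
  have "monochrome n e S = (\<Sum>i\<in>{1..n}. if S c = i then of_bool (\<forall>a\<in>e. S a = S c) else 0)"
    unfolding monochrome_def using assms by (intro sum.cong) auto
  also have "\<dots> = of_bool (S c \<in> {1..n} \<and> (\<forall>a\<in>e. S a = S c))"
    by (subst sum.delta') auto
  finally show ?thesis .
qed

lemma monochrome_mult_overlap: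
  assumes "c \<in> e" "c \<in> f"
  shows "monochrome n e S * monochrome n f S = monochrome n (e \<union> f) S"
proof -
  have "c \<in> e \<union> f" using assms by blast
  thus ?thesis
    unfolding monochrome_eq_of_bool[OF assms(1)] monochrome_eq_of_bool[OF assms(2)]
      monochrome_eq_of_bool[OF \<open>c \<in> e \<union> f\<close>] ball_Un
    by simp
qed

lemma monochrome_mult_disjoint:
  assumes "e \<inter> f = {}"
  shows "monochrome n e S * monochrome n f S =
    (\<Sum>i\<in>{1..n}. \<Sum>j\<in>{1..n}. of_bool (\<forall>a\<in>e \<union> f. S a = (if a \<in> e then i else j)))"
  unfolding monochrome_def sum_product
  using assms by (intro sum.cong refl) (auto simp: ball_Un)

lemma expectation_monochrome:
  assumes "finite V" "e \<subseteq> V"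
  shows "measure_pmf.expectation (Pi_pmf V d (\<lambda>_. P)) (monochrome n e) = (\<Sum>i\<in>{1..n}. pmf P i ^ card e)"
proof -
  have "measure_pmf.expectation (Pi_pmf V d (\<lambda>_. P)) (monochrome n e)
      = (\<Sum>i\<in>{1..n}. measure_pmf.prob (Pi_pmf V d (\<lambda>_. P)) {S. \<forall>a\<in>e. S a = i})"
    unfolding monochrome_def expectation_of_bool_eq_prob[symmetric]
    by (rule Bochner_Integration.integral_sum) simp
  thus ?thesis by (simp add: prob_Pi_pmf_agree_on[OF assms])
qed

lemma expectation_monochrome_mult_disjoint:
  assumes "finite V" "e \<subseteq> V" "f \<subseteq> V" "e \<inter> f = {}"
  shows "measure_pmf.expectation (Pi_pmf V d (\<lambda>_. P)) (\<lambda>S. monochrome n e S * monochrome n f S)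
       = (\<Sum>i\<in>{1..n}. pmf P i ^ card e) * (\<Sum>i\<in>{1..n}. pmf P i ^ card f)"
proof -
  have fin: "finite e" "finite f" using assms by (auto intro: finite_subset)
  have "measure_pmf.expectation (Pi_pmf V d (\<lambda>_. P)) (\<lambda>S. monochrome n e S * monochrome n f S)
      = (\<Sum>i\<in>{1..n}. \<Sum>j\<in>{1..n}. measure_pmf.prob (Pi_pmf V d (\<lambda>_. P))
            {S. \<forall>a\<in>e \<union> f. S a = (if a \<in> e then i else j)})"
    unfolding monochrome_mult_disjoint[OF assms(4)] expectation_of_bool_eq_prob[symmetric]
    by (simp del: sum_of_bool_eq add: Bochner_Integration.integral_sum)
  also have "\<dots> = (\<Sum>i\<in>{1..n}. \<Sum>j\<in>{1..n}. \<Prod>a\<in>e \<union> f. pmf P (if a \<in> e then i else j))"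
    using assms by (simp add: prob_Pi_pmf_agree_on)
  also have "\<dots> = (\<Sum>i\<in>{1..n}. \<Sum>j\<in>{1..n}. (\<Prod>a\<in>e. pmf P i) * (\<Prod>a\<in>f. pmf P j))"
    unfolding prod.union_disjoint[OF fin assms(4)] using assms(4)
    by (intro sum.cong refl arg_cong2[where f = "(*)"] prod.cong) auto
  finally show ?thesis by (simp add: sum_product)
qed

lemma expectation_monochrome_mult_edges:
  assumes "comparison_graph V E" "e \<in> E" "f \<in> E"
  shows "measure_pmf.expectation (Pi_pmf V d (\<lambda>_. P)) (\<lambda>S. monochrome n e S * monochrome n f S)
    = (if e = f then muP n P else if e \<inter> f \<noteq> {} then gammaP n P else (muP n P)\<^sup>2)"
proof -
  have V: "finite V" "e \<subseteq> V" "f \<subseteq> V" and card: "card e = 2" "card f = 2"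
    using assms by (auto simp: comparison_graph_def)
  show ?thesis
  proof (cases "e \<inter> f = {}")
    case True
    moreover have "e \<noteq> f" using True card by auto
    ultimately show ?thesis using expectation_monochrome_mult_disjoint[OF V True] card
      by (simp add: muP_def power2_eq_square)
  next
    case False
    then obtain c where c: "c \<in> e" "c \<in> f" by blast
    have "measure_pmf.expectation (Pi_pmf V d (\<lambda>_. P)) (\<lambda>S. monochrome n e S * monochrome n f S)
        = (\<Sum>i\<in>{1..n}. pmf P i ^ card (e \<union> f))"
      unfolding monochrome_mult_overlap[OF c] using V by (intro expectation_monochrome) auto
    moreover have "card (e \<union> f) = (if e = f then 2 else 3)"
      using card_Un_adjacent_edges[OF card _ c] card by auto
    ultimately show ?thesis using False by (simp add: muP_def gammaP_def)
  qed
qed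

lemma expectation_sum_monochrome:
  assumes "comparison_graph V E"
  shows "measure_pmf.expectation (Pi_pmf V d (\<lambda>_. P)) (\<lambda>S. \<Sum>e\<in>E. monochrome n e S)
    = real (card E) * muP n P"
proof -
  have "measure_pmf.expectation (Pi_pmf V d (\<lambda>_. P)) (monochrome n e) = muP n P" if "e \<in> E" for e
    using assms that expectation_monochrome[of V e d P n] by (simp add: comparison_graph_def muP_def)
  thus ?thesis by (simp add: Bochner_Integration.integral_sum)
qed

lemma variance_sum_monochrome:
  assumes "comparison_graph V E" "finite (set_pmf P)"
  shows "measure_pmf.variance (Pi_pmf V d (\<lambda>_. P)) (\<lambda>S. \<Sum>e\<in>E. monochrome n e S)
    = real (card E) * (muP n P - (muP n P)\<^sup>2)
      + real (card (adjacent_edge_pairs E)) * (gammaP n P - (muP n P)\<^sup>2)"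
proof -
  define M where "M = Pi_pmf V d (\<lambda>_. P)"
  define \<mu> \<gamma> where "\<mu> = muP n P" and "\<gamma> = gammaP n P"
  let ?A = "adjacent_edge_pairs E"
  have fE: "finite E" using assms(1) by (rule comparison_graph_finite_edges)
  have int: "integrable (measure_pmf M) g" for g :: "_ \<Rightarrow> real"
    using assms unfolding M_def comparison_graph_def by (intro integrable_Pi_pmf_finite) auto
  have moment: "measure_pmf.expectation M (\<lambda>S. monochrome n e S * monochrome n f S)
      = \<mu>\<^sup>2 + of_bool (e = f) * (\<mu> - \<mu>\<^sup>2) + of_bool ((e, f) \<in> ?A) * (\<gamma> - \<mu>\<^sup>2)"
    if "e \<in> E" "f \<in> E" for e f
    using expectation_monochrome_mult_edges[OF assms(1) that] that
    unfolding M_def \<mu>_def \<gamma>_def adjacent_edge_pairs_def by auto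
  have "measure_pmf.expectation M (\<lambda>S. (\<Sum>e\<in>E. monochrome n e S)\<^sup>2)
      = (\<Sum>e\<in>E. \<Sum>f\<in>E. measure_pmf.expectation M (\<lambda>S. monochrome n e S * monochrome n f S))"
    by (simp add: power2_eq_square sum_product Bochner_Integration.integral_sum int)
  also have "\<dots> = (\<Sum>e\<in>E. \<Sum>f\<in>E. \<mu>\<^sup>2 + of_bool (e = f) * (\<mu> - \<mu>\<^sup>2) + of_bool ((e, f) \<in> ?A) * (\<gamma> - \<mu>\<^sup>2))"
    by (intro sum.cong refl moment)
  also have "\<dots> = (real (card E) * \<mu>)\<^sup>2 + real (card E) * (\<mu> - \<mu>\<^sup>2) + real (card ?A) * (\<gamma> - \<mu>\<^sup>2)"
    using sum_sum_diagonal_relation[OF fE, of ?A] by (auto simp: adjacent_edge_pairs_def power_mult_distrib)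
  finally have second: "measure_pmf.expectation M (\<lambda>S. (\<Sum>e\<in>E. monochrome n e S)\<^sup>2)
      = (real (card E) * \<mu>)\<^sup>2 + real (card E) * (\<mu> - \<mu>\<^sup>2) + real (card ?A) * (\<gamma> - \<mu>\<^sup>2)" .
  have first: "measure_pmf.expectation M (\<lambda>S. \<Sum>e\<in>E. monochrome n e S) = real (card E) * \<mu>"
    unfolding M_def \<mu>_def using assms(1) by (rule expectation_sum_monochrome)
  have "measure_pmf.variance M (\<lambda>S. \<Sum>e\<in>E. monochrome n e S)
      = measure_pmf.expectation M (\<lambda>S. (\<Sum>e\<in>E. monochrome n e S)\<^sup>2)
        - (measure_pmf.expectation M (\<lambda>S. \<Sum>e\<in>E. monochrome n e S))\<^sup>2"
    by (rule measure_pmf.variance_eq) (simp_all add: int)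
  also have "\<dots> = real (card E) * (\<mu> - \<mu>\<^sup>2) + real (card ?A) * (\<gamma> - \<mu>\<^sup>2)"
    unfolding first second by simp
  finally show ?thesis unfolding M_def \<mu>_def \<gamma>_def .
qed

lemma variance_sum_monochrome_le:
  assumes "comparison_graph V E" "set_pmf P \<subseteq> {1..n}"
    and "real (cG V E) * (gammaP n P - (muP n P)\<^sup>2) \<le> real (card E) * (muP n P - (muP n P)\<^sup>2)"
  shows "measure_pmf.variance (Pi_pmf V d (\<lambda>_. P)) (\<lambda>S. \<Sum>e\<in>E. monochrome n e S)
    \<le> 2 * real (card E) * muP n P"
proof -
  have "(muP n P)\<^sup>2 \<le> gammaP n P"
    unfolding muP_def gammaP_def using sum_pmf_eq_1[OF _ assms(2)]
    by (intro sum_squares_squared_le_sum_cubes) auto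
  hence "real (card (adjacent_edge_pairs E)) * (gammaP n P - (muP n P)\<^sup>2)
      \<le> real (cG V E) * (gammaP n P - (muP n P)\<^sup>2)"
    using card_adjacent_edge_pairs_le_cG[OF assms(1)] by (intro mult_right_mono) auto
  moreover have "finite (set_pmf P)" using assms(2) finite_subset by blast
  hence "measure_pmf.variance (Pi_pmf V d (\<lambda>_. P)) (\<lambda>S. \<Sum>e\<in>E. monochrome n e S)
    = real (card E) * (muP n P - (muP n P)\<^sup>2)
      + real (card (adjacent_edge_pairs E)) * (gammaP n P - (muP n P)\<^sup>2)"
    by (rule variance_sum_monochrome[OF assms(1)])
  moreover have "real (card E) * (muP n P - (muP n P)\<^sup>2) \<le> real (card E) * muP n P"
    by (simp add: mult_left_mono)
  ultimately show ?thesis using assms(3) by linarith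
qed

section \<open>The collision test\<close>

lemma collisions_eq_sum_monochrome:
  assumes "comparison_graph V E" "S ` V \<subseteq> {1..n}"
  shows "real (collisions E S) = (\<Sum>e\<in>E. monochrome n e S)"
proof -
  have "monochrome n e S = of_bool (\<exists>u v. e = {u, v} \<and> S u = S v)" if "e \<in> E" for e
  proof -
    have "e \<subseteq> V" "card e = 2" using assms(1) that by (auto simp: comparison_graph_def)
    then obtain u v where uv: "u \<noteq> v" "e = {u, v}" by (auto simp: card_2_iff)
    have "S u \<in> {1..n}" using assms(2) uv \<open>e \<subseteq> V\<close> by auto
    hence "monochrome n e S = of_bool (S u = S v)" using monochrome_eq_of_bool[of u e n S] uv by auto
    also have "(S u = S v) \<longleftrightarrow> (\<exists>u' v'. e = {u', v'} \<and> S u' = S v')"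
      using uv by (auto simp: doubleton_eq_iff)
    finally show ?thesis .
  qed
  hence "(\<Sum>e\<in>E. monochrome n e S) = (\<Sum>e\<in>E. of_bool (\<exists>u v. e = {u, v} \<and> S u = S v))"
    by simp
  also have "\<dots> = real (collisions E S)"
    using comparison_graph_finite_edges[OF assms(1)] by (simp add: collisions_def Collect_conj_eq)
  finally show ?thesis ..
qed

lemma prob_yes_eq_prob_sum_monochrome:
  assumes "comparison_graph V E" "set_pmf P \<subseteq> {1..n}"
  shows "prob_yes V E n \<tau> \<epsilon> P
    = measure_pmf.prob (Pi_pmf V 0 (\<lambda>_. P)) {S. (\<Sum>e\<in>E. monochrome n e S) < threshold E n \<tau> \<epsilon>}"
proof -
  let ?M = "Pi_pmf V 0 (\<lambda>_. P)"
  have "finite V" using assms(1) by (simp add: comparison_graph_def)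
  hence "S ` V \<subseteq> {1..n}" if "S \<in> set_pmf ?M" for S
    using that assms(2) by (auto simp: set_Pi_pmf PiE_dflt_def)
  hence "real (collisions E S) = (\<Sum>e\<in>E. monochrome n e S)" if "S \<in> set_pmf ?M" for S
    using that by (intro collisions_eq_sum_monochrome[OF assms(1)])
  hence "{S. real (collisions E S) < threshold E n \<tau> \<epsilon>} \<inter> set_pmf ?M
      = {S. (\<Sum>e\<in>E. monochrome n e S) < threshold E n \<tau> \<epsilon>} \<inter> set_pmf ?M"
    by auto
  thus ?thesis unfolding prob_yes_def by (metis measure_Int_set_pmf)
qed

theorem lemma10:
  fixes V :: "'v set" and E :: "'v set set" and n :: nat and \<epsilon> \<tau> :: real and P :: "nat pmf"
  assumes "n \<ge> 1" and "0 < \<epsilon>" and "\<epsilon> \<le> 1" and "0 \<le> \<tau>" and "\<tau> < 1"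
    and "comparison_graph V E"
    and "set_pmf P \<subseteq> {1..n}"
    and "l1_to_uniform n P \<ge> \<epsilon>"
    and "real (card E) * (muP n P - (muP n P)^2) \<ge> real (cG V E) * (gammaP n P - (muP n P)^2)"
    and "real (card E) \<ge> 16 * real n / ((1 - \<tau>)^2 * \<epsilon>^4)"
  shows "prob_yes V E n \<tau> \<epsilon> P \<le> 1/4"
proof -
  define \<mu> where "\<mu> = muP n P"
  define D where "D = real (card E) * (1 - \<tau>) * (\<mu> - 1 / n)"
  let ?M = "Pi_pmf V 0 (\<lambda>_. P)" and ?Z = "\<lambda>S. \<Sum>e\<in>E. monochrome n e S"
  have gap: "\<epsilon>\<^sup>2 / n \<le> \<mu> - 1 / n"
    using sum_squares_ge_of_l1_distance_uniform[of "{1..n}" "pmf P" \<epsilon>] sum_pmf_eq_1[OF _ assms(7)]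
      assms(1,2,8) unfolding \<mu>_def muP_def l1_to_uniform_def by simp
  have "0 < 16 * real n / ((1 - \<tau>)\<^sup>2 * \<epsilon> ^ 4)" using assms(1,2,5) by simp
  hence "0 < real (card E)" using assms(10) by linarith
  moreover have "0 < \<epsilon>\<^sup>2 / n" using assms(1,2) by simp
  ultimately have "0 < D" unfolding D_def using assms(5) gap by simp
  have "prob_yes V E n \<tau> \<epsilon> P = measure_pmf.prob ?M {S \<in> space ?M. ?Z S < threshold E n \<tau> \<epsilon>}"
    using prob_yes_eq_prob_sum_monochrome[OF assms(6,7)] by simp
  also have "\<dots> \<le> measure_pmf.variance ?M ?Z / D\<^sup>2"
  proof (rule measure_pmf.prob_less_le_variance)
    show "integrable ?M (\<lambda>S. (?Z S)\<^sup>2)"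
      using assms(6,7) finite_subset by (intro integrable_Pi_pmf_finite) (auto simp: comparison_graph_def)
    show "threshold E n \<tau> \<epsilon> \<le> measure_pmf.expectation ?M ?Z - D"
      unfolding expectation_sum_monochrome[OF assms(6)] D_def \<mu>_def[symmetric]
      using assms(4) gap by (rule threshold_le_mean_minus_gap)
  qed (simp_all add: \<open>0 < D\<close>)
  also have "\<dots> \<le> 2 * real (card E) * \<mu> / D\<^sup>2"
    unfolding \<mu>_def using variance_sum_monochrome_le[OF assms(6,7,9)] by (simp add: divide_right_mono)
  also have "\<dots> \<le> 1 / 4"
    using chebyshev_ratio_le_quarter[of n \<epsilon> \<tau> "\<mu> - 1 / n" "card E"] assms(1-3,5,10) gap
    unfolding D_def by simp
  finally show ?thesis .
qed

end
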